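(* Let $\mathcal{M}_1,\mathcal{M}_2$ be transducers over input alphabet $\Sigma$ and output alphabet $\Gamma$, and let $\mathcal{A}_{\mathit{Up}}$ be a deterministic finite automaton recognizing a language $\mathit{Up}\subseteq\Sigma^*$. If $\llbracket\mathcal{M}_1\rrbracket_{|\mathit{Up}}\neq\llbracket\mathcal{M}_2\rrbracket_{|\mathit{Up}}$, then there exists $u\in\mathit{Up}$ with $|u|\leq 2\cdot(|\mathcal{M}_1|\cdot|\mathcal{M}_2|\cdot|\mathcal{A}_{\mathit{Up}}|)^2$ on which $\llbracket\mathcal{M}_1\rrbracket$ and $\llbracket\mathcal{M}_2\rrbracket$ differ, i.e. $u$ lies in exactly one of $\mathrm{dom}(\llbracket\mathcal{M}_1\rrbracket)$, $\mathrm{dom}(\llbracket\mathcal{M}_2\rrbracket)$, or $u$ lies in both and $\llbracket\mathcal{M}_1\rrbracket(u)\neq\llbracket\mathcal{M}_2\rrbracket(u)$.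
   Context: A (subsequential string) transducer is a tuple $\mathcal{M}=(\Sigma,\Gamma,Q,q_0,w_0,\delta,\delta_F)$ with finite input alphabet $\Sigma$, finite output alphabet $\Gamma$, finite state set $Q$, initial state $q_0$, initial production $w_0\in\Gamma^*$, partial transition function $\delta:Q\times\Sigma\to Q\times\Gamma^*$ (write $q\xrightarrow{a|w}q'$ when $\delta(q,a)=(q',w)$) and partial final function $\delta_F:Q\to\Gamma^*$ ($q$ is final if $\delta_F(q)$ is defined). Runs are extended to words: $q\xrightarrow{\varepsilon|\varepsilon}{}^*q$, and if $q\xrightarrow{u|w}{}^*q'$ and $q'\xrightarrow{a|w'}q''$ then $q\xrightarrow{ua|ww'}{}^*q''$. The partial function $\llbracket\mathcal{M}\rrbracket:\Sigma^*\to\Gamma^*$ is $\llbracket\mathcal{M}\rrbracket(u)=w_0\,w\,\delta_F(q)$ if $q_0\xrightarrow{u|w}{}^*q$ with $q$ final, and undefined otherwise; $\mathrm{dom}$ denotes its domain and $\llbracket\mathcal{M}\rrbracket_{|L}$ its restriction to a language $L$ (restrictions are compared as partial functions). $|\mathcal{M}|$ is the number of states of $\mathcal{M}$ and $|\mathcal{A}_{\mathit{Up}}|$ the number of states of $\mathcal{A}_{\mathit{Up}}$. *)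

theory Defs
  imports Main
begin

record ('q, 'a, 'b) transducer =
  t_states :: "'q set"
  t_init :: 'q
  t_init_out :: "'b list"
  t_delta :: "'q \<Rightarrow> 'a \<Rightarrow> ('q \<times> 'b list) option"
  t_final :: "'q \<Rightarrow> 'b list option"

definition wf_transducer ::
  "'a set \<Rightarrow> 'b set \<Rightarrow> ('q, 'a, 'b) transducer \<Rightarrow> bool" where
  "wf_transducer Sig Gam M \<longleftrightarrow>
     finite Sig \<and> finite Gam \<and> finite (t_states M) \<and>
     t_init M \<in> t_states M \<and> set (t_init_out M) \<subseteq> Gam \<and>
     (\<forall>q a. t_delta M q a \<noteq> None \<longrightarrow> q \<in> t_states M \<and> a \<in> Sig) \<and>
     (\<forall>q a q' w. t_delta M q a = Some (q', w) \<longrightarrow> q' \<in> t_states M \<and> set w \<subseteq> Gam) \<and>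
     (\<forall>q. t_final M q \<noteq> None \<longrightarrow> q \<in> t_states M) \<and>
     (\<forall>q w. t_final M q = Some w \<longrightarrow> set w \<subseteq> Gam)"

fun t_run :: "('q, 'a, 'b) transducer \<Rightarrow> 'q \<Rightarrow> 'a list \<Rightarrow> ('q \<times> 'b list) option" where
  "t_run M q [] = Some (q, [])"
| "t_run M q (a # u) =
     (case t_delta M q a of
        None \<Rightarrow> None
      | Some (q', w) \<Rightarrow>
          (case t_run M q' u of None \<Rightarrow> None | Some (q'', w') \<Rightarrow> Some (q'', w @ w')))"

definition t_sem :: "('q, 'a, 'b) transducer \<Rightarrow> 'a list \<Rightarrow> 'b list option" where
  "t_sem M u =
     (case t_run M (t_init M) u of
        None \<Rightarrow> None
      | Some (q, w) \<Rightarrow>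
          (case t_final M q of None \<Rightarrow> None | Some wF \<Rightarrow> Some (t_init_out M @ w @ wF)))"

record ('s, 'a) dfa =
  d_states :: "'s set"
  d_init :: 's
  d_delta :: "'s \<Rightarrow> 'a \<Rightarrow> 's"
  d_accept :: "'s set"

definition wf_dfa :: "'a set \<Rightarrow> ('s, 'a) dfa \<Rightarrow> bool" where
  "wf_dfa Sig A \<longleftrightarrow>
     finite Sig \<and> finite (d_states A) \<and> d_init A \<in> d_states A \<and>
     d_accept A \<subseteq> d_states A \<and>
     (\<forall>s \<in> d_states A. \<forall>a \<in> Sig. d_delta A s a \<in> d_states A)"

definition dfa_lang :: "'a set \<Rightarrow> ('s, 'a) dfa \<Rightarrow> 'a list set" where
  "dfa_lang Sig A = {u. set u \<subseteq> Sig \<and> foldl (d_delta A) (d_init A) u \<in> d_accept A}"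

definition restrict_lang :: "('a list \<Rightarrow> 'b option) \<Rightarrow> 'a list set \<Rightarrow> 'a list \<Rightarrow> 'b option" where
  "restrict_lang f L = (\<lambda>u. if u \<in> L then f u else None)"

end

theory Submission
  imports Defs
begin

text \<open>Take a shortest counterexample u and record, for each cut position i, the profile
  consisting of the states reached by M1, M2 and the automaton on the prefix of length i.
  Two equal profiles at positions i < j let us delete the factor between them, which keeps
  the word in Up and keeps both domains; so if exactly one transducer is defined on u, all
  length u + 1 profiles are distinct. If both are defined, three equal profiles at
  i < j < k split u as x y1 y2 z with y1, y2 loops of both transducers; the outputs of
  x z, x y1 z, x y2 z agree by minimality, and these three equations of words force the
  outputs on x y1 y2 z = u to agree as well. Hence every profile occurs at most twice.
  In both cases length u < 3 N with N = |M1| |M2| |A_Up|, and 3 N - 1 \<le> 2 N^2.\<close>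

lemma t_run_append:
  "t_run M q (x @ y) = (case t_run M q x of None \<Rightarrow> None | Some (q', v) \<Rightarrow>
      (case t_run M q' y of None \<Rightarrow> None | Some (q'', w) \<Rightarrow> Some (q'', v @ w)))"
  by (induction x arbitrary: q) (auto split: option.split)

lemma t_run_in_states:
  assumes "wf_transducer Sig Gam M" "q \<in> t_states M" "t_run M q w = Some (q', v)"
  shows "q' \<in> t_states M"
  using assms(2,3)
proof (induction w arbitrary: q v)
  case (Cons a w)
  then obtain p x v' where "t_delta M q a = Some (p, x)" "t_run M p w = Some (q', v')"
    by (auto split: option.splits)
  with assms(1) Cons.IH show ?case
    unfolding wf_transducer_def by blast
qed simp

text \<open>Unlike t_sem, this residual semantics omits the initial production.\<close>
definition t_sem_from :: "('q, 'a, 'b) transducer \<Rightarrow> 'q \<Rightarrow> 'a list \<Rightarrow> 'b list option" where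
  "t_sem_from M q w = (case t_run M q w of None \<Rightarrow> None
      | Some (q', v) \<Rightarrow> map_option ((@) v) (t_final M q'))"

definition t_state :: "('q, 'a, 'b) transducer \<Rightarrow> 'a list \<Rightarrow> 'q option" where
  "t_state M w = map_option fst (t_run M (t_init M) w)"

lemma t_sem_conv_t_sem_from:
  "t_sem M w = map_option ((@) (t_init_out M)) (t_sem_from M (t_init M) w)"
  unfolding t_sem_def t_sem_from_def by (auto split: option.split)

lemma t_sem_from_append:
  assumes "t_run M q x = Some (q', v)"
  shows "t_sem_from M q (x @ w) = map_option ((@) v) (t_sem_from M q' w)"
  using assms unfolding t_sem_from_def
  by (auto simp: t_run_append option.map_comp o_def split: option.split intro!: option.map_cong)

lemma t_state_in_states:
  assumes "wf_transducer Sig Gam M" "t_state M w = Some q"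
  shows "q \<in> t_states M"
  using assms t_run_in_states[OF assms(1)] unfolding t_state_def wf_transducer_def by auto

lemma t_sem_append_if_t_state_None:
  "t_state M x = None \<Longrightarrow> t_sem M (x @ z) = None"
  unfolding t_state_def t_sem_def by (simp add: t_run_append)

lemma t_state_take_if_t_sem:
  assumes "t_sem M w \<noteq> None"
  shows "t_state M (take i w) \<noteq> None"
proof
  assume "t_state M (take i w) = None"
  then have "t_sem M (take i w @ drop i w) = None" by (rule t_sem_append_if_t_state_None)
  with assms show False by simp
qed

lemma t_sem_append_if_t_state_Some:
  assumes "t_state M x = Some q"
  obtains p where "\<And>z. t_sem M (x @ z) = map_option ((@) p) (t_sem_from M q z)"
proof -
  from assms obtain v where "t_run M (t_init M) x = Some (q, v)"
    unfolding t_state_def by auto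
  then show thesis
    by (intro that[of "t_init_out M @ v"])
      (auto simp: t_sem_conv_t_sem_from t_sem_from_append option.map_comp o_def intro!: option.map_cong)
qed

lemma t_run_loop_if_t_state_eq:
  assumes "t_state M x = Some q" "t_state M (x @ y) = Some q"
  obtains v where "t_run M q y = Some (q, v)"
  using assms unfolding t_state_def by (auto simp: t_run_append split: option.splits)

lemma t_sem_None_cong:
  assumes "t_state M x = t_state M y"
  shows "t_sem M (x @ z) = None \<longleftrightarrow> t_sem M (y @ z) = None"
proof (cases "t_state M x")
  case None
  then show ?thesis using assms by (simp add: t_sem_append_if_t_state_None)
next
  case (Some q)
  obtain p where "\<And>z. t_sem M (x @ z) = map_option ((@) p) (t_sem_from M q z)"
    using t_sem_append_if_t_state_Some[OF Some] by blast
  moreover obtain p' where "\<And>z. t_sem M (y @ z) = map_option ((@) p') (t_sem_from M q z)"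
    using t_sem_append_if_t_state_Some[of M y q] Some assms by metis
  ultimately show ?thesis by simp
qed

text \<open>If the state after x is undefined, r = None satisfies all four equations.\<close>
lemma t_sem_two_loops:
  assumes "t_state M x = t_state M (x @ y1)" "t_state M (x @ y1) = t_state M (x @ y1 @ y2)"
  shows "\<exists>p b c r.
    t_sem M (x @ z) = map_option (\<lambda>d. p @ d) r \<and>
    t_sem M (x @ y1 @ z) = map_option (\<lambda>d. p @ b @ d) r \<and>
    t_sem M (x @ y2 @ z) = map_option (\<lambda>d. p @ c @ d) r \<and>
    t_sem M (x @ y1 @ y2 @ z) = map_option (\<lambda>d. p @ b @ c @ d) r"
proof (cases "t_state M x")
  case None
  with assms show ?thesis
    using t_sem_append_if_t_state_None[of M] by (metis option.map(1))
next
  case (Some q)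
  obtain p where p: "\<And>z. t_sem M (x @ z) = map_option ((@) p) (t_sem_from M q z)"
    using t_sem_append_if_t_state_Some[OF Some] by blast
  obtain b where b: "t_run M q y1 = Some (q, b)"
    using t_run_loop_if_t_state_eq[of M x q y1] Some assms by metis
  obtain c where c: "t_run M q y2 = Some (q, c)"
    using t_run_loop_if_t_state_eq[of M "x @ y1" q y2] Some assms by auto
  show ?thesis
    by (intro exI[of _ p] exI[of _ b] exI[of _ c] exI[of _ "t_sem_from M q z"])
      (simp add: p t_sem_from_append[OF b] t_sem_from_append[OF c] option.map_comp o_def)
qed

text \<open>t conjugates b1 to b2 and c1 to c2, hence b1 @ c1 to b2 @ c2.\<close>
lemma append_pumping_eq_prefix:
  assumes "a2 = a1 @ t" "a1 @ d1 = a2 @ d2"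
    "a1 @ b1 @ d1 = a2 @ b2 @ d2" "a1 @ c1 @ d1 = a2 @ c2 @ d2"
  shows "a1 @ b1 @ c1 @ d1 = a2 @ b2 @ c2 @ d2"
proof -
  have d1: "d1 = t @ d2" using assms(1,2) by simp
  have "b1 @ t = t @ b2" "c1 @ t = t @ c2" using assms d1 by simp_all
  then have "b1 @ c1 @ t = t @ b2 @ c2" by (metis append_assoc)
  then show ?thesis using assms(1) d1 by (metis append_assoc)
qed

lemma append_pumping_eq:
  assumes "a1 @ d1 = a2 @ d2"
    "a1 @ b1 @ d1 = a2 @ b2 @ d2" "a1 @ c1 @ d1 = a2 @ c2 @ d2"
  shows "a1 @ b1 @ c1 @ d1 = a2 @ b2 @ c2 @ d2"
proof -
  obtain t where "a2 = a1 @ t \<or> a1 = a2 @ t"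
    using assms(1) by (auto simp: append_eq_append_conv2)
  then consider "a2 = a1 @ t" | "a1 = a2 @ t" by blast
  then show ?thesis
  proof cases
    case 1
    then show ?thesis using assms by (rule append_pumping_eq_prefix)
  next
    case 2
    then have "a2 @ b2 @ c2 @ d2 = a1 @ b1 @ c1 @ d1"
      using assms[symmetric] by (rule append_pumping_eq_prefix)
    then show ?thesis ..
  qed
qed

lemma t_sem_eq_two_loops:
  assumes "t_state M1 x = t_state M1 (x @ y1)" "t_state M1 (x @ y1) = t_state M1 (x @ y1 @ y2)"
    and "t_state M2 x = t_state M2 (x @ y1)" "t_state M2 (x @ y1) = t_state M2 (x @ y1 @ y2)"
    and "t_sem M1 (x @ z) = t_sem M2 (x @ z)"
    and "t_sem M1 (x @ y1 @ z) = t_sem M2 (x @ y1 @ z)"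
    and "t_sem M1 (x @ y2 @ z) = t_sem M2 (x @ y2 @ z)"
  shows "t_sem M1 (x @ y1 @ y2 @ z) = t_sem M2 (x @ y1 @ y2 @ z)"
proof -
  obtain p1 b1 c1 r1 where M1:
    "t_sem M1 (x @ z) = map_option (\<lambda>d. p1 @ d) r1"
    "t_sem M1 (x @ y1 @ z) = map_option (\<lambda>d. p1 @ b1 @ d) r1"
    "t_sem M1 (x @ y2 @ z) = map_option (\<lambda>d. p1 @ c1 @ d) r1"
    "t_sem M1 (x @ y1 @ y2 @ z) = map_option (\<lambda>d. p1 @ b1 @ c1 @ d) r1"
    using t_sem_two_loops[OF assms(1,2)] by blast
  obtain p2 b2 c2 r2 where M2:
    "t_sem M2 (x @ z) = map_option (\<lambda>d. p2 @ d) r2"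
    "t_sem M2 (x @ y1 @ z) = map_option (\<lambda>d. p2 @ b2 @ d) r2"
    "t_sem M2 (x @ y2 @ z) = map_option (\<lambda>d. p2 @ c2 @ d) r2"
    "t_sem M2 (x @ y1 @ y2 @ z) = map_option (\<lambda>d. p2 @ b2 @ c2 @ d) r2"
    using t_sem_two_loops[OF assms(3,4)] by blast
  show ?thesis
  proof (cases r1)
    case None
    then show ?thesis using M1 M2 assms(5) by simp
  next
    case (Some d1)
    then obtain d2 where "r2 = Some d2" using M1(1) M2(1) assms(5) by auto
    then show ?thesis
      using Some M1 M2 assms(5-7) append_pumping_eq[of p1 d1 p2 d2 b1 b2 c1 c2] by simp
  qed
qed

lemma dfa_state_in_states:
  "wf_dfa Sig A \<Longrightarrow> s \<in> d_states A \<Longrightarrow> set w \<subseteq> Sig \<Longrightarrow> foldl (d_delta A) s w \<in> d_states A"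
  by (induction w arbitrary: s) (auto simp: wf_dfa_def)

lemma dfa_lang_replace_prefix:
  assumes "y @ z \<in> dfa_lang Sig A" "set x \<subseteq> Sig"
    and "foldl (d_delta A) (d_init A) x = foldl (d_delta A) (d_init A) y"
  shows "x @ z \<in> dfa_lang Sig A"
  using assms unfolding dfa_lang_def by simp

lemma card_le_twice_card_image:
  fixes f :: "'a::linorder \<Rightarrow> 'b"
  assumes "finite A"
    and no_three: "\<And>i j k. i \<in> A \<Longrightarrow> j \<in> A \<Longrightarrow> k \<in> A \<Longrightarrow> i < j \<Longrightarrow> j < k \<Longrightarrow>
      f i = f j \<Longrightarrow> f j = f k \<Longrightarrow> False"
  shows "card A \<le> 2 * card (f ` A)"
proof -
  txt \<open>Flagging repeated values makes f injective, since no value occurs a third time.\<close>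
  define g where "g i = (f i, \<exists>h\<in>A. h < i \<and> f h = f i)" for i
  have "inj_on g A"
  proof -
    have False if "i \<in> A" "j \<in> A" "i < j" "g i = g j" for i j
    proof -
      from that have "\<exists>h\<in>A. h < i \<and> f h = f i" "f i = f j"
        unfolding g_def by auto
      then show False using no_three that by metis
    qed
    then show ?thesis
      unfolding inj_on_def by (metis linorder_neqE)
  qed
  then have "card A = card (g ` A)" by (simp add: card_image)
  also have "\<dots> \<le> card (f ` A \<times> (UNIV :: bool set))"
    using assms(1) by (intro card_mono) (auto simp: g_def)
  also have "\<dots> = 2 * card (f ` A)" by (simp add: card_cartesian_product)
  finally show ?thesis .
qed

lemma less_three_times_imp_le_twice_square:
  fixes n N :: nat
  assumes "n < 3 * N"
  shows "n \<le> 2 * N^2"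
proof (cases "N \<le> 1")
  case True
  with assms show ?thesis by (cases N) auto
next
  case False
  then have "2 * N \<le> N * N" "N \<le> N * N" using mult_le_mono1[of 2 N N] by auto
  with assms show ?thesis unfolding power2_eq_square by linarith
qed

locale shortest_difference =
  fixes Sig :: "'a set" and Gam :: "'b set"
    and M1 :: "('q1, 'a, 'b) transducer" and M2 :: "('q2, 'a, 'b) transducer"
    and A :: "('s, 'a) dfa" and u :: "'a list"
  assumes wf_M1: "wf_transducer Sig Gam M1" and wf_M2: "wf_transducer Sig Gam M2"
    and wf_A: "wf_dfa Sig A"
    and u_in_lang: "u \<in> dfa_lang Sig A"
    and u_differs: "t_sem M1 u \<noteq> t_sem M2 u"
    and shorter_agree: "\<And>v. v \<in> dfa_lang Sig A \<Longrightarrow> length v < length u \<Longrightarrow> t_sem M1 v = t_sem M2 v"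
begin

definition profile :: "nat \<Rightarrow> 'q1 option \<times> 'q2 option \<times> 's" where
  "profile i = (t_state M1 (take i u), t_state M2 (take i u),
     foldl (d_delta A) (d_init A) (take i u))"

lemma cut_agrees:
  assumes "i < j" "j \<le> length u" "profile i = profile j"
  shows "t_sem M1 (take i u @ drop j u) = t_sem M2 (take i u @ drop j u)"
proof (rule shorter_agree)
  have "set (take i u) \<subseteq> Sig"
    using u_in_lang set_take_subset unfolding dfa_lang_def by fastforce
  then show "take i u @ drop j u \<in> dfa_lang Sig A"
    using dfa_lang_replace_prefix[of "take j u" "drop j u" Sig A "take i u"] u_in_lang assms(3)
    unfolding profile_def by simp
  show "length (take i u @ drop j u) < length u" using assms(1,2) by simp
qed

lemma cut_None_iff:
  assumes "profile i = profile j"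
  shows "t_sem M1 (take i u @ drop j u) = None \<longleftrightarrow> t_sem M1 u = None"
    and "t_sem M2 (take i u @ drop j u) = None \<longleftrightarrow> t_sem M2 u = None"
  using assms t_sem_None_cong[of M1 "take i u" "take j u" "drop j u"]
    t_sem_None_cong[of M2 "take i u" "take j u" "drop j u"]
  unfolding profile_def by simp_all

lemma no_three_equal_profiles:
  assumes "i < j" "j < k" "k \<le> length u" "profile i = profile j" "profile j = profile k"
  shows False
proof -
  define x y1 y2 z where "x = take i u" "y1 = take (j - i) (drop i u)"
    "y2 = take (k - j) (drop j u)" "z = drop k u"
  have x_y1: "x @ y1 = take j u"
    using take_add[of i "j - i" u] assms(1) unfolding x_y1_y2_z_def by simp
  have x_y1_y2: "x @ y1 @ y2 = take k u"
    using take_add[of j "k - j" u] assms(2) x_y1 unfolding x_y1_y2_z_def by simp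
  have y2_z: "y2 @ z = drop j u"
    using append_take_drop_id[of "k - j" "drop j u"] assms(2) unfolding x_y1_y2_z_def by simp
  have u: "u = x @ y1 @ y2 @ z"
    using arg_cong[of _ _ "\<lambda>v. v @ z", OF x_y1_y2] unfolding x_y1_y2_z_def by simp
  have "t_sem M1 (x @ y1 @ y2 @ z) = t_sem M2 (x @ y1 @ y2 @ z)"
  proof (rule t_sem_eq_two_loops)
    show "t_state M1 x = t_state M1 (x @ y1)" "t_state M1 (x @ y1) = t_state M1 (x @ y1 @ y2)"
      "t_state M2 x = t_state M2 (x @ y1)" "t_state M2 (x @ y1) = t_state M2 (x @ y1 @ y2)"
      using assms(4,5) unfolding x_y1 x_y1_y2 unfolding x_y1_y2_z_def profile_def by simp_all
    show "t_sem M1 (x @ z) = t_sem M2 (x @ z)"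
      using cut_agrees[of i k] assms unfolding x_y1_y2_z_def by simp
    show "t_sem M1 (x @ y1 @ z) = t_sem M2 (x @ y1 @ z)"
      using cut_agrees[of j k] assms x_y1 unfolding x_y1_y2_z_def
      by (metis append.assoc)
    show "t_sem M1 (x @ y2 @ z) = t_sem M2 (x @ y2 @ z)"
      using cut_agrees[of i j] assms y2_z unfolding x_y1_y2_z_def by simp
  qed
  then show False using u u_differs by simp
qed

lemma inj_on_profile_if_one_undefined:
  assumes "t_sem M1 u = None \<or> t_sem M2 u = None"
  shows "inj_on profile {0..length u}"
proof -
  have False if "i < j" "j \<le> length u" "profile i = profile j" for i j
    using cut_agrees[OF that] cut_None_iff[OF that(3)] assms u_differs by auto
  then show ?thesis
    by (intro inj_onI) (metis atLeastAtMost_iff linorder_neqE_nat)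
qed

definition profile_space :: "('q1 option \<times> 'q2 option \<times> 's) set" where
  "profile_space = (Some ` t_states M1 \<times> Some ` t_states M2 \<times> d_states A)
     \<union> ({None} \<times> Some ` t_states M2 \<times> d_states A)
     \<union> (Some ` t_states M1 \<times> {None} \<times> d_states A)"

lemma finite_states: "finite (t_states M1)" "finite (t_states M2)" "finite (d_states A)"
  using wf_M1 wf_M2 wf_A unfolding wf_transducer_def wf_dfa_def by auto

lemma card_states_ge_1: "1 \<le> card (t_states M1)" "1 \<le> card (t_states M2)" "1 \<le> card (d_states A)"
  using wf_M1 wf_M2 wf_A finite_states unfolding wf_transducer_def wf_dfa_def
  by (auto simp: Suc_le_eq card_gt_0_iff)

lemma card_profile_space:
  "card profile_space \<le> 3 * (card (t_states M1) * card (t_states M2) * card (d_states A))"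
  (is "_ \<le> 3 * ?N")
proof -
  have "card profile_space \<le> ?N + card (t_states M2) * card (d_states A)
      + card (t_states M1) * card (d_states A)"
    unfolding profile_space_def
    using card_Un_le[of "Some ` t_states M1 \<times> Some ` t_states M2 \<times> d_states A"
        "{None} \<times> Some ` t_states M2 \<times> d_states A"]
      card_Un_le[of "(Some ` t_states M1 \<times> Some ` t_states M2 \<times> d_states A)
        \<union> ({None} \<times> Some ` t_states M2 \<times> d_states A)"
        "Some ` t_states M1 \<times> {None} \<times> d_states A"]
    by (simp add: card_cartesian_product card_image)
  moreover have "card (t_states M2) * card (d_states A) \<le> ?N"
    "card (t_states M1) * card (d_states A) \<le> ?N"
    using card_states_ge_1 by simp_all
  ultimately show ?thesis by linarith
qed

lemma profile_in_profile_space: "profile i \<in> profile_space"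
proof -
  have "set (take i u) \<subseteq> Sig"
    using u_in_lang set_take_subset unfolding dfa_lang_def by fastforce
  moreover have "d_init A \<in> d_states A" using wf_A unfolding wf_dfa_def by simp
  ultimately have "foldl (d_delta A) (d_init A) (take i u) \<in> d_states A"
    using dfa_state_in_states[OF wf_A] by blast
  moreover have "t_state M1 (take i u) \<noteq> None \<or> t_state M2 (take i u) \<noteq> None"
    using u_differs t_state_take_if_t_sem[of M1 u i] t_state_take_if_t_sem[of M2 u i] by force
  ultimately show ?thesis
    using t_state_in_states[OF wf_M1, of "take i u"] t_state_in_states[OF wf_M2, of "take i u"]
    unfolding profile_def profile_space_def
    by (cases "t_state M1 (take i u)"; cases "t_state M2 (take i u)") (simp_all add: image_iff)
qed

lemma length_less_three_card_products:
  "length u < 3 * (card (t_states M1) * card (t_states M2) * card (d_states A))"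
  (is "_ < 3 * ?N")
proof (cases "t_sem M1 u = None \<or> t_sem M2 u = None")
  case True
  have "length u + 1 = card (profile ` {0..length u})"
    using card_image[OF inj_on_profile_if_one_undefined[OF True]] by simp
  also have "\<dots> \<le> card profile_space"
    using profile_in_profile_space finite_states
    by (intro card_mono) (simp add: profile_space_def, blast)
  finally show ?thesis using card_profile_space by simp
next
  case False
  have "profile i \<in> Some ` t_states M1 \<times> Some ` t_states M2 \<times> d_states A" for i
  proof -
    have "t_state M1 (take i u) \<noteq> None" "t_state M2 (take i u) \<noteq> None"
      using False t_state_take_if_t_sem by blast+
    then show ?thesis
      using profile_in_profile_space[of i] unfolding profile_space_def profile_def by auto
  qed
  then have "profile ` {0..length u} \<subseteq> Some ` t_states M1 \<times> Some ` t_states M2 \<times> d_states A"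
    by blast
  then have "card (profile ` {0..length u})
      \<le> card (Some ` t_states M1 \<times> Some ` t_states M2 \<times> d_states A)"
    by (rule card_mono[rotated]) (simp add: finite_states)
  also have "\<dots> = ?N" by (simp add: card_cartesian_product card_image)
  finally have "card (profile ` {0..length u}) \<le> ?N" .
  moreover have "card {0..length u} \<le> 2 * card (profile ` {0..length u})"
    by (rule card_le_twice_card_image) (use no_three_equal_profiles in auto)
  ultimately show ?thesis using card_states_ge_1 by simp
qed

end

theorem mainTheorem7:
  fixes Sig :: "'a set" and Gam :: "'b set"
    and M1 :: "('q1, 'a, 'b) transducer" and M2 :: "('q2, 'a, 'b) transducer"
    and A :: "('s, 'a) dfa" and Up :: "'a list set"
  assumes "wf_transducer Sig Gam M1"
    and "wf_transducer Sig Gam M2"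
    and "wf_dfa Sig A"
    and "dfa_lang Sig A = Up"
    and "restrict_lang (t_sem M1) Up \<noteq> restrict_lang (t_sem M2) Up"
  shows "\<exists>u \<in> Up. length u \<le> 2 * (card (t_states M1) * card (t_states M2) * card (d_states A))^2
           \<and> t_sem M1 u \<noteq> t_sem M2 u"
proof -
  let ?N = "card (t_states M1) * card (t_states M2) * card (d_states A)"
  let ?W = "{u \<in> Up. t_sem M1 u \<noteq> t_sem M2 u}"
  obtain u0 where "u0 \<in> ?W"
    using assms(5) unfolding restrict_lang_def fun_eq_iff by (auto split: if_splits)
  then obtain u where u: "u \<in> ?W" and shortest: "\<And>v. v \<in> ?W \<Longrightarrow> length u \<le> length v"
    using ex_has_least_nat[of "\<lambda>v. v \<in> ?W" u0 length] by blast
  interpret shortest_difference Sig Gam M1 M2 A u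
    using assms(1-4) u shortest by unfold_locales (auto simp: not_le[symmetric])
  have "length u < 3 * ?N" by (rule length_less_three_card_products)
  then have "length u \<le> 2 * ?N^2" by (rule less_three_times_imp_le_twice_square)
  then show ?thesis using u by blast
qed

end
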